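(* Let $G$ be a simple directed graph. The unrestricted transition matrix of simple moves $T^u_{\mathrm{SM}}=p_{\mathrm{SEF}}T^u_{\mathrm{SEF}}+p_{\mathrm{DEM}}T^u_{\mathrm{DEM}}$ (with $p_{\mathrm{SEF}},p_{\mathrm{DEM}}\in(0,1)$, $p_{\mathrm{SEF}}+p_{\mathrm{DEM}}=1$) is doubly stochastic and irreducible on the state space $\mathcal{G}_0^\infty(G)$. If $G$ further contains at least one double edge, $T^u_{\mathrm{SM}}$ is also aperiodic.
   Context: A simple directed graph is a pair $G=(V,E)$ with $V$ finite and $E\subseteq (V\times V)\setminus\{(v,v):v\in V\}$. An edge $(i,j)\in E$ is a single edge if $(j,i)\notin E$; an ordered pair $(k,l)$ is a double edge if both $(k,l),(l,k)\in E$. $\mathrm{pr}(V,E)=(V,\{\{u,v\}:(u,v)\in E\})$. $\mathcal{G}_0^\infty(G)$ is the (finite) set of all simple directed graphs $G'$ on $V$ with $\mathrm{pr}(G')=\mathrm{pr}(G)$ and the same number of directed edges as $G$. Moves: $\mathrm{SEF}_{i,j}(V,E)=(V,(E\setminus\{(i,j)\})\cup\{(j,i)\})$ for a single edge $(i,j)$; $\mathrm{DEM}^{k,l}_{i,j}(V,E)=(V,(E\setminus\{(k,l)\})\cup\{(j,i)\})$ for a single edge $(i,j)$ and a double edge $(k,l)$. Transition matrices on $\mathcal{G}_0^\infty(G)$: $T^u_{\mathrm{SEF}}(H,H')$ is the probability that a single edge $(i,j)$ of $H$, drawn uniformly among all single edges of $H$, satisfies $\mathrm{SEF}_{i,j}(H)=H'$;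 $T^u_{\mathrm{DEM}}(H,H')$ is the probability that a single edge $(i,j)$ and a double edge $(k,l)$ of $H$, each drawn uniformly among the single (resp. double) edges of $H$, satisfy $\mathrm{DEM}^{k,l}_{i,j}(H)=H'$. Convention: if $H$ has no eligible edges for a move (no single edge for SEF; no single edge or no double edge for DEM), that move leaves $H$ unchanged, i.e. the corresponding matrix has $1$ on the diagonal entry $(H,H)$. A matrix is doubly stochastic if it and its transpose are stochastic; irreducible if every state is reachable from every other with positive probability in finitely many steps; aperiodic if the gcd of the return times of the chain is $1$. *)

theory Defs
  imports Complex_Main
begin

definition simple_digraph :: "'v set \<Rightarrow> ('v \<times> 'v) set \<Rightarrow> bool" where
  "simple_digraph V E \<longleftrightarrow> finite V \<and> E \<subseteq> V \<times> V \<and> (\<forall>v. (v, v) \<notin> E)"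

definition single_edges :: "('v \<times> 'v) set \<Rightarrow> ('v \<times> 'v) set" where
  "single_edges E = {(i, j). (i, j) \<in> E \<and> (j, i) \<notin> E}"

definition double_edges :: "('v \<times> 'v) set \<Rightarrow> ('v \<times> 'v) set" where
  "double_edges E = {(k, l). (k, l) \<in> E \<and> (l, k) \<in> E}"

definition pr_edges :: "('v \<times> 'v) set \<Rightarrow> 'v set set" where
  "pr_edges E = {{u, v} | u v. (u, v) \<in> E}"

definition state_space :: "'v set \<Rightarrow> ('v \<times> 'v) set \<Rightarrow> ('v \<times> 'v) set set" where
  "state_space V E = {E'. simple_digraph V E' \<and> pr_edges E' = pr_edges E \<and> card E' = card E}"

definition SEF :: "'v \<Rightarrow> 'v \<Rightarrow> ('v \<times> 'v) set \<Rightarrow> ('v \<times> 'v) set" where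
  "SEF i j E = (E - {(i, j)}) \<union> {(j, i)}"

definition DEM :: "'v \<Rightarrow> 'v \<Rightarrow> 'v \<Rightarrow> 'v \<Rightarrow> ('v \<times> 'v) set \<Rightarrow> ('v \<times> 'v) set" where
  "DEM k l i j E = (E - {(k, l)}) \<union> {(j, i)}"

definition T_SEF :: "('v \<times> 'v) set \<Rightarrow> ('v \<times> 'v) set \<Rightarrow> real" where
  "T_SEF H H' =
     (if single_edges H = {} then (if H' = H then 1 else 0)
      else real (card {(i, j) \<in> single_edges H. SEF i j H = H'}) / real (card (single_edges H)))"

definition T_DEM :: "('v \<times> 'v) set \<Rightarrow> ('v \<times> 'v) set \<Rightarrow> real" where
  "T_DEM H H' =
     (if single_edges H = {} \<or> double_edges H = {} then (if H' = H then 1 else 0)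
      else real (card {((i, j), (k, l)) \<in> single_edges H \<times> double_edges H. DEM k l i j H = H'})
           / (real (card (single_edges H)) * real (card (double_edges H))))"

definition T_SM :: "real \<Rightarrow> real \<Rightarrow> ('v \<times> 'v) set \<Rightarrow> ('v \<times> 'v) set \<Rightarrow> real" where
  "T_SM p_SEF p_DEM H H' = p_SEF * T_SEF H H' + p_DEM * T_DEM H H'"

definition stochastic_on :: "'s set \<Rightarrow> ('s \<Rightarrow> 's \<Rightarrow> real) \<Rightarrow> bool" where
  "stochastic_on S T \<longleftrightarrow> (\<forall>x\<in>S. \<forall>y\<in>S. T x y \<ge> 0) \<and> (\<forall>x\<in>S. (\<Sum>y\<in>S. T x y) = 1)"

definition doubly_stochastic_on :: "'s set \<Rightarrow> ('s \<Rightarrow> 's \<Rightarrow> real) \<Rightarrow> bool" where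
  "doubly_stochastic_on S T \<longleftrightarrow> stochastic_on S T \<and> stochastic_on S (\<lambda>x y. T y x)"

fun mat_pow_on :: "'s set \<Rightarrow> ('s \<Rightarrow> 's \<Rightarrow> real) \<Rightarrow> nat \<Rightarrow> 's \<Rightarrow> 's \<Rightarrow> real" where
  "mat_pow_on S T 0 x y = (if x = y then 1 else 0)"
| "mat_pow_on S T (Suc n) x y = (\<Sum>z\<in>S. mat_pow_on S T n x z * T z y)"

definition irreducible_on :: "'s set \<Rightarrow> ('s \<Rightarrow> 's \<Rightarrow> real) \<Rightarrow> bool" where
  "irreducible_on S T \<longleftrightarrow> (\<forall>x\<in>S. \<forall>y\<in>S. \<exists>n. mat_pow_on S T n x y > 0)"

definition aperiodic_on :: "'s set \<Rightarrow> ('s \<Rightarrow> 's \<Rightarrow> real) \<Rightarrow> bool" where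
  "aperiodic_on S T \<longleftrightarrow> (\<forall>x\<in>S. Gcd {n. n > 0 \<and> mat_pow_on S T n x x > 0} = 1)"

end

theory Submission
  imports Defs
begin

text \<open>Both move kernels are symmetric on the state space: SEF at (i, j) is undone by SEF at (j, i),
  and DEM with single edge (i, j) and double edge (k, l) is undone by DEM with single edge (l, k)
  and double edge (j, i). All states have the same numbers of single and double edges, so the
  normalisations agree, and the stochastic matrix T_SM is symmetric, hence doubly stochastic.

  For irreducibility, a state x \<noteq> y can be moved strictly closer to y, measured by the size of
  x - y. Take (u, v) in x - y. If it is single in x, flip it. If it is double, then since double
  edges are equinumerous y has a double edge (a, b) missing from x; (b, a) is single in x, and
  DEM trades (u, v) for (a, b).

  If G has a double edge, so does every state x. If x has no single edge, SEF leaves it in place,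
  a self-loop. Otherwise, with (i, j) single and (k, l) double in x, x returns to itself after two
  steps (flip (i, j) twice) and after three steps (flip (i, j), then DEM with (j, i) and (k, l),
  then DEM with (l, k) and (j, i)), so the period is 1.\<close>

lemma mat_pow_on_nonneg:
  assumes "\<forall>a\<in>S. \<forall>b\<in>S. T a b \<ge> 0" and "y \<in> S"
  shows "mat_pow_on S T n x y \<ge> 0"
  using assms(2)
  by (induction n arbitrary: y) (auto intro!: sum_nonneg mult_nonneg_nonneg simp: assms(1))

lemma mat_pow_on_Suc_pos:
  assumes "finite S" and nonneg: "\<forall>a\<in>S. \<forall>b\<in>S. T a b \<ge> 0" and "y \<in> S" "z \<in> S"
    and "mat_pow_on S T n x y > 0" "T y z > 0"
  shows "mat_pow_on S T (Suc n) x z > 0"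
proof -
  have "0 < mat_pow_on S T n x y * T y z" using assms by simp
  also have "\<dots> \<le> (\<Sum>w\<in>S. mat_pow_on S T n x w * T w z)"
    using assms mat_pow_on_nonneg[OF nonneg] by (intro member_le_sum) auto
  finally show ?thesis by simp
qed

lemma mat_pow_on_pos_if_reachable:
  assumes "finite S" "\<forall>a\<in>S. \<forall>b\<in>S. T a b \<ge> 0" "x \<in> S"
    and "(\<lambda>a b. a \<in> S \<and> b \<in> S \<and> T a b > 0)\<^sup>*\<^sup>* x y"
  shows "\<exists>n. mat_pow_on S T n x y > 0"
  using assms(4)
proof (induction rule: rtranclp_induct)
  case base
  have "mat_pow_on S T 0 x x > 0" by simp
  then show ?case ..
next
  case (step y z)
  then show ?case using mat_pow_on_Suc_pos[OF assms(1,2)] by blast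
qed

lemma mat_pow_on_pos_walk:
  assumes "finite S" and nonneg: "\<forall>a\<in>S. \<forall>b\<in>S. T a b \<ge> 0" and "x \<in> S" "set ys \<subseteq> S"
    and "successively (\<lambda>a b. T a b > 0) (x # ys)"
  shows "mat_pow_on S T (length ys) x (last (x # ys)) > 0"
  using assms(4,5)
proof (induction ys rule: rev_induct)
  case Nil
  then show ?case by simp
next
  case (snoc y ys)
  have "last (x # ys) \<in> S" using snoc.prems \<open>x \<in> S\<close> by (cases ys) auto
  moreover have "successively (\<lambda>a b. T a b > 0) (x # ys)" "T (last (x # ys)) y > 0"
    using snoc.prems(2) by (simp_all add: successively_append_iff flip: append_Cons)
  ultimately show ?case
    using snoc mat_pow_on_Suc_pos[OF assms(1) nonneg] by simp
qed

lemma doubly_stochastic_on_if_symmetric: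
  assumes "stochastic_on S T" and "\<And>x y. x \<in> S \<Longrightarrow> y \<in> S \<Longrightarrow> T x y = T y x"
  shows "doubly_stochastic_on S T"
proof -
  have "(\<Sum>y\<in>S. T y x) = (\<Sum>y\<in>S. T x y)" if "x \<in> S" for x
    using assms(2) that by (intro sum.cong) auto
  then show ?thesis
    using assms unfolding doubly_stochastic_on_def stochastic_on_def by auto
qed

lemma Gcd_eq_1_if_consecutive:
  fixes N :: "nat set"
  assumes "n \<in> N" and "Suc n \<in> N"
  shows "Gcd N = 1"
proof -
  have "Gcd N dvd Suc n - n" using assms by (intro dvd_diff_nat Gcd_dvd)
  then show ?thesis by simp
qed

text \<open>The common shape of T_SEF and T_DEM: a move m drawn uniformly from M turns the state x
  into f m, and with no move available the chain stays at x.\<close>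
definition move_kernel :: "'m set \<Rightarrow> ('m \<Rightarrow> 's) \<Rightarrow> 's \<Rightarrow> 's \<Rightarrow> real" where
  "move_kernel M f x y =
     (if M = {} then (if y = x then 1 else 0) else real (card {m \<in> M. f m = y}) / real (card M))"

lemma move_kernel_nonneg: "move_kernel M f x y \<ge> 0"
  by (simp add: move_kernel_def)

lemma move_kernel_pos:
  assumes "finite M" and "m \<in> M"
  shows "move_kernel M f x (f m) > 0"
proof -
  have "finite {m' \<in> M. f m' = f m}" using assms(1) by simp
  moreover have "m \<in> {m' \<in> M. f m' = f m}" using assms(2) by simp
  ultimately have "card {m' \<in> M. f m' = f m} > 0" by (auto simp: card_gt_0_iff)
  moreover have "card M > 0" using assms by (auto simp: card_gt_0_iff)
  ultimately show ?thesis using assms(2) by (auto simp: move_kernel_def)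
qed

lemma move_kernel_row_sum:
  assumes "finite M" "finite S" "x \<in> S" "f ` M \<subseteq> S"
  shows "(\<Sum>y\<in>S. move_kernel M f x y) = 1"
proof (cases "M = {}")
  case True
  then show ?thesis using assms(2,3) by (simp add: move_kernel_def)
next
  case False
  have "(\<Sum>y\<in>S. card {m \<in> M. f m = y}) = card M"
    using sum.group[OF assms(1,2,4), of "\<lambda>_. 1::nat"] by simp
  then have "(\<Sum>y\<in>S. real (card {m \<in> M. f m = y})) = real (card M)"
    by (metis of_nat_sum)
  then show ?thesis
    using False assms(1) by (simp add: move_kernel_def flip: sum_divide_distrib)
qed

lemma move_kernel_swap:
  assumes "finite M" "finite M'" "card M = card M'"
    and "bij_betw h {m \<in> M. f m = y} {m' \<in> M'. f' m' = x}"
  shows "move_kernel M f x y = move_kernel M' f' y x"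
proof -
  have "M = {} \<longleftrightarrow> M' = {}" using assms(1-3) by auto
  then show ?thesis
    using bij_betw_same_card[OF assms(4)] assms(3) by (auto simp: move_kernel_def)
qed

lemma T_SEF_eq_move_kernel: "T_SEF H = move_kernel (single_edges H) (\<lambda>(i, j). SEF i j H) H"
  by (intro ext) (simp add: T_SEF_def move_kernel_def case_prod_unfold)

lemma T_DEM_eq_move_kernel:
  "T_DEM H = move_kernel (single_edges H \<times> double_edges H) (\<lambda>((i, j), (k, l)). DEM k l i j H) H"
  by (intro ext)
    (simp add: T_DEM_def move_kernel_def case_prod_unfold card_cartesian_product mem_Times_iff)

lemma single_edges_eq: "single_edges x = x - x\<inverse>"
  by (auto simp: single_edges_def)

lemma double_edges_eq: "double_edges x = x \<inter> x\<inverse>"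
  by (auto simp: double_edges_def)

lemma mem_pr_edges_iff: "{u, v} \<in> pr_edges A \<longleftrightarrow> (u, v) \<in> A \<union> A\<inverse>"
  by (auto simp: pr_edges_def doubleton_eq_iff)

lemma pr_edges_eq_image: "pr_edges A = (\<lambda>(u, v). {u, v}) ` (A \<union> A\<inverse>)"
  by (auto simp: pr_edges_def insert_commute)

lemma pr_edges_eq_iff: "pr_edges A = pr_edges B \<longleftrightarrow> A \<union> A\<inverse> = B \<union> B\<inverse>"
proof
  assume "pr_edges A = pr_edges B"
  then have "e \<in> A \<union> A\<inverse> \<longleftrightarrow> e \<in> B \<union> B\<inverse>" for e
    using mem_pr_edges_iff[of "fst e" "snd e" A] mem_pr_edges_iff[of "fst e" "snd e" B] by simp
  then show "A \<union> A\<inverse> = B \<union> B\<inverse>" by blast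
qed (simp add: pr_edges_eq_image)

lemma state_space_iff:
  "x \<in> state_space V E \<longleftrightarrow> simple_digraph V x \<and> x \<union> x\<inverse> = E \<union> E\<inverse> \<and> card x = card E"
  by (simp add: state_space_def pr_edges_eq_iff)

lemma state_space_irrefl: "x \<in> state_space V E \<Longrightarrow> (v, v) \<notin> x"
  by (simp add: state_space_iff simple_digraph_def)

lemma simple_digraph_finite: "simple_digraph V E \<Longrightarrow> finite E"
  unfolding simple_digraph_def by (meson finite_SigmaI finite_subset)

lemma finite_state_space: "simple_digraph V E \<Longrightarrow> finite (state_space V E)"
proof -
  assume "simple_digraph V E"
  then have "state_space V E \<subseteq> Pow (V \<times> V)" and "finite (V \<times> V)"
    by (auto simp: state_space_def simple_digraph_def)
  then show ?thesis by (meson finite_Pow_iff finite_subset)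
qed

lemma self_in_state_space: "simple_digraph V E \<Longrightarrow> E \<in> state_space V E"
  by (simp add: state_space_def)

lemma card_double_edges_eq:
  assumes "finite x" "finite y" "x \<union> x\<inverse> = y \<union> y\<inverse>" "card x = card y"
  shows "card (double_edges x) = card (double_edges y)"
proof -
  have "card z + card z = card (z \<union> z\<inverse>) + card (double_edges z)"
    if "finite z" for z :: "('a \<times> 'a) set"
    using card_Un_Int[of z "z\<inverse>"] that by (simp add: double_edges_eq)
  from this[OF assms(1)] this[OF assms(2)] show ?thesis
    unfolding assms(3,4) by linarith
qed

lemma card_single_edges_eq:
  assumes "finite x" "finite y" "x \<union> x\<inverse> = y \<union> y\<inverse>" "card x = card y"
  shows "card (single_edges x) = card (single_edges y)"
proof -
  have "card (single_edges z) = card z - card (double_edges z)"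
    if "finite z" for z :: "('a \<times> 'a) set"
    unfolding single_edges_eq double_edges_eq using that by (intro card_Diff_subset_Int) simp
  from this[OF assms(1)] this[OF assms(2)] show ?thesis
    using card_double_edges_eq[OF assms] assms(4) by simp
qed

lemma finite_edges_state_space:
  assumes "x \<in> state_space V E"
  shows "finite x" "finite (single_edges x)" "finite (double_edges x)"
proof -
  show "finite x" using assms by (intro simple_digraph_finite[of V]) (simp add: state_space_iff)
  then show "finite (single_edges x)" "finite (double_edges x)"
    by (simp_all add: single_edges_eq double_edges_eq)
qed

lemma card_edges_state_space:
  assumes x: "x \<in> state_space V E" and y: "y \<in> state_space V E"
  shows "card (single_edges x) = card (single_edges y)"
    and "card (double_edges x) = card (double_edges y)"
proof -
  have edges: "x \<union> x\<inverse> = y \<union> y\<inverse>" "card x = card y" using x y by (simp_all add: state_space_iff)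
  note fin = finite_edges_state_space(1)[OF x] finite_edges_state_space(1)[OF y]
  show "card (single_edges x) = card (single_edges y)" by (rule card_single_edges_eq[OF fin edges])
  show "card (double_edges x) = card (double_edges y)" by (rule card_double_edges_eq[OF fin edges])
qed

lemma card_exchange:
  assumes "finite A" "a \<in> A" "b \<notin> A"
  shows "card (A - {a} \<union> {b}) = card A"
  using assms card_Suc_Diff1[of A a] by simp

lemma SEF_in_state_space:
  assumes x: "x \<in> state_space V E" and ij: "(i, j) \<in> single_edges x"
  shows "SEF i j x \<in> state_space V E"
proof -
  have edges: "(i, j) \<in> x" "(j, i) \<notin> x" using ij by (auto simp: single_edges_def)
  have "card (SEF i j x) = card x"
    unfolding SEF_def using edges finite_edges_state_space(1)[OF x] by (intro card_exchange)
  moreover have "SEF i j x \<union> (SEF i j x)\<inverse> = x \<union> x\<inverse>"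
    using edges by (auto simp: SEF_def)
  moreover have "simple_digraph V (SEF i j x)"
    using x edges by (auto simp: state_space_iff simple_digraph_def SEF_def)
  ultimately show ?thesis using x by (simp add: state_space_iff)
qed

lemma DEM_in_state_space:
  assumes x: "x \<in> state_space V E" and ij: "(i, j) \<in> single_edges x" and kl: "(k, l) \<in> double_edges x"
  shows "DEM k l i j x \<in> state_space V E"
proof -
  have edges: "(i, j) \<in> x" "(j, i) \<notin> x" "(k, l) \<in> x" "(l, k) \<in> x"
    using ij kl by (auto simp: single_edges_def double_edges_def)
  have "k \<noteq> l" using state_space_irrefl[OF x] edges(3) by auto
  have "card (DEM k l i j x) = card x"
    unfolding DEM_def using edges finite_edges_state_space(1)[OF x] by (intro card_exchange)
  moreover have "DEM k l i j x \<union> (DEM k l i j x)\<inverse> = x \<union> x\<inverse>"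
    using edges \<open>k \<noteq> l\<close> by (auto simp: DEM_def)
  moreover have "simple_digraph V (DEM k l i j x)"
    using x edges by (auto simp: state_space_iff simple_digraph_def DEM_def)
  ultimately show ?thesis using x by (simp add: state_space_iff)
qed

lemma SEF_reverse:
  assumes "(i, j) \<in> single_edges x"
  shows "(j, i) \<in> single_edges (SEF i j x)" and "SEF j i (SEF i j x) = x"
  using assms by (auto simp: single_edges_def SEF_def)

lemma DEM_reverse:
  assumes "(i, j) \<in> single_edges x" "(k, l) \<in> double_edges x" "k \<noteq> l"
  shows "(l, k) \<in> single_edges (DEM k l i j x)" and "(j, i) \<in> double_edges (DEM k l i j x)"
    and "DEM j i l k (DEM k l i j x) = x"
  using assms by (auto simp: single_edges_def double_edges_def DEM_def)

lemma T_SEF_sym: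
  assumes x: "x \<in> state_space V E" and y: "y \<in> state_space V E"
  shows "T_SEF x y = T_SEF y x"
proof -
  let ?rev = "\<lambda>(i, j). (j, i)"
  have "bij_betw ?rev {e \<in> single_edges x. (\<lambda>(i, j). SEF i j x) e = y}
                      {e \<in> single_edges y. (\<lambda>(i, j). SEF i j y) e = x}"
    by (rule bij_betw_byWitness[where f' = ?rev]) (auto simp: SEF_reverse)
  then show ?thesis
    unfolding T_SEF_eq_move_kernel
    using finite_edges_state_space[OF x] finite_edges_state_space[OF y] card_edges_state_space(1)[OF x y]
    by (intro move_kernel_swap) auto
qed

lemma T_DEM_sym:
  assumes x: "x \<in> state_space V E" and y: "y \<in> state_space V E"
  shows "T_DEM x y = T_DEM y x"
proof -
  let ?rev = "\<lambda>((i, j), (k, l)). ((l, k), (j, i))"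
  let ?F = "\<lambda>x y. {m \<in> single_edges x \<times> double_edges x. (\<lambda>((i, j), (k, l)). DEM k l i j x) m = y}"
  have rev_fibre: "?rev m \<in> ?F y x" if "m \<in> ?F x y" "x \<in> state_space V E" for m x y
  proof -
    obtain i j k l where m: "m = ((i, j), (k, l))" by (metis surj_pair)
    then have "k \<noteq> l"
      using that state_space_irrefl[of x] by (auto simp: double_edges_def)
    then show ?thesis using that DEM_reverse[of i j x k l] m by auto
  qed
  have "bij_betw ?rev (?F x y) (?F y x)"
    using rev_fibre x y by (intro bij_betw_byWitness[where f' = ?rev]) auto
  then show ?thesis
    unfolding T_DEM_eq_move_kernel
    using finite_edges_state_space[OF x] finite_edges_state_space[OF y] card_edges_state_space[OF x y]
    by (intro move_kernel_swap) (auto simp: card_cartesian_product)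
qed

lemma T_SEF_row_sum:
  assumes "simple_digraph V E" "x \<in> state_space V E"
  shows "(\<Sum>y\<in>state_space V E. T_SEF x y) = 1"
  unfolding T_SEF_eq_move_kernel using assms
  by (intro move_kernel_row_sum) (auto simp: finite_state_space finite_edges_state_space SEF_in_state_space)

lemma T_DEM_row_sum:
  assumes "simple_digraph V E" "x \<in> state_space V E"
  shows "(\<Sum>y\<in>state_space V E. T_DEM x y) = 1"
  unfolding T_DEM_eq_move_kernel using assms
  by (intro move_kernel_row_sum) (auto simp: finite_state_space finite_edges_state_space DEM_in_state_space)

lemma T_SM_nonneg: "0 \<le> p \<Longrightarrow> 0 \<le> q \<Longrightarrow> 0 \<le> T_SM p q x y"
  by (simp add: T_SM_def T_SEF_eq_move_kernel T_DEM_eq_move_kernel move_kernel_nonneg)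

lemma T_SM_sym:
  "x \<in> state_space V E \<Longrightarrow> y \<in> state_space V E \<Longrightarrow> T_SM p q x y = T_SM p q y x"
  by (simp add: T_SM_def T_SEF_sym T_DEM_sym)

lemma stochastic_on_T_SM:
  assumes "simple_digraph V E" "0 \<le> p" "0 \<le> q" "p + q = 1"
  shows "stochastic_on (state_space V E) (T_SM p q)"
proof -
  have "(\<Sum>y\<in>state_space V E. T_SM p q x y) = 1" if "x \<in> state_space V E" for x
    using assms T_SEF_row_sum[OF assms(1) that] T_DEM_row_sum[OF assms(1) that]
    by (simp add: T_SM_def sum.distrib flip: sum_distrib_left)
  then show ?thesis unfolding stochastic_on_def using T_SM_nonneg[OF assms(2,3)] by blast
qed

lemma T_SM_SEF_pos:
  assumes "0 < p" "0 \<le> q" "x \<in> state_space V E" "(i, j) \<in> single_edges x"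
  shows "0 < T_SM p q x (SEF i j x)"
proof -
  have "0 < T_SEF x (SEF i j x)"
    unfolding T_SEF_eq_move_kernel using assms(3,4) finite_edges_state_space(2)
    by (metis (no_types, lifting) case_prod_conv move_kernel_pos)
  then show ?thesis
    using assms(1,2) by (simp add: T_SM_def T_DEM_eq_move_kernel move_kernel_nonneg add_pos_nonneg)
qed

lemma T_SM_DEM_pos:
  assumes "0 \<le> p" "0 < q" "x \<in> state_space V E" "(i, j) \<in> single_edges x" "(k, l) \<in> double_edges x"
  shows "0 < T_SM p q x (DEM k l i j x)"
proof -
  have "finite (single_edges x \<times> double_edges x)" using finite_edges_state_space[OF assms(3)] by simp
  then have "0 < T_DEM x (DEM k l i j x)"
    unfolding T_DEM_eq_move_kernel using assms(4,5)
    by (metis (no_types, lifting) case_prod_conv mem_Sigma_iff move_kernel_pos)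
  then show ?thesis
    using assms(1,2) by (simp add: T_SM_def T_SEF_eq_move_kernel move_kernel_nonneg add_nonneg_pos)
qed

lemma T_SM_self_pos:
  assumes "0 < p" "0 \<le> q" "single_edges x = {}"
  shows "0 < T_SM p q x x"
  using assms by (simp add: T_SM_def T_SEF_def T_DEM_eq_move_kernel move_kernel_nonneg add_pos_nonneg)

lemma exists_double_edge_not_in:
  assumes x: "x \<in> state_space V E" and y: "y \<in> state_space V E"
    and "(u, v) \<in> double_edges x" "(u, v) \<notin> y"
  shows "\<exists>a b. (a, b) \<in> double_edges y \<and> (a, b) \<notin> x"
proof (rule ccontr)
  assume "\<not> ?thesis"
  then have "double_edges y \<subseteq> double_edges x" by (auto simp: double_edges_def)
  then have "double_edges y = double_edges x"
    using card_subset_eq finite_edges_state_space(3)[OF x] card_edges_state_space(2)[OF x y] by metis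
  then show False using assms(3,4) by (auto simp: double_edges_def)
qed

lemma exists_move_closer:
  assumes p: "0 < p" and q: "0 < q" and x: "x \<in> state_space V E" and y: "y \<in> state_space V E"
    and "x \<noteq> y"
  shows "\<exists>x'\<in>state_space V E. 0 < T_SM p q x x' \<and> card (x' - y) < card (x - y)"
proof -
  have "\<not> x \<subseteq> y"
    using assms card_subset_eq[OF finite_edges_state_space(1)[OF y]] by (auto simp: state_space_iff)
  then obtain u v where uv: "(u, v) \<in> x" "(u, v) \<notin> y" by auto
  have sym_closure: "x \<union> x\<inverse> = y \<union> y\<inverse>" using x y by (simp add: state_space_iff)
  then have "(v, u) \<in> y" using uv by blast
  have closer: "card (x - y - {(u, v)}) < card (x - y)"
    using uv finite_edges_state_space(1)[OF x] by (intro card_Diff1_less) auto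
  show ?thesis
  proof (cases "(v, u) \<in> x")
    case False
    then have uv_single: "(u, v) \<in> single_edges x" using uv by (simp add: single_edges_def)
    have "SEF u v x - y = x - y - {(u, v)}" using \<open>(v, u) \<in> y\<close> by (auto simp: SEF_def)
    then show ?thesis
      using SEF_in_state_space[OF x uv_single] T_SM_SEF_pos[OF p less_imp_le[OF q] x uv_single] closer
      by auto
  next
    case True
    then have uv_double: "(u, v) \<in> double_edges x" using uv by (simp add: double_edges_def)
    obtain a b where ab: "(a, b) \<in> double_edges y" "(a, b) \<notin> x"
      using exists_double_edge_not_in[OF x y uv_double uv(2)] by blast
    then have ba_single: "(b, a) \<in> single_edges x"
      using sym_closure by (auto simp: single_edges_def double_edges_def)
    have "DEM u v b a x - y = x - y - {(u, v)}" using ab(1) by (auto simp: DEM_def double_edges_def)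
    then show ?thesis
      using DEM_in_state_space[OF x ba_single uv_double]
        T_SM_DEM_pos[OF less_imp_le[OF p] q x ba_single uv_double] closer
      by auto
  qed
qed

lemma state_space_reachable:
  assumes "0 < p" "0 < q" "x \<in> state_space V E" "y \<in> state_space V E"
  shows "(\<lambda>a b. a \<in> state_space V E \<and> b \<in> state_space V E \<and> 0 < T_SM p q a b)\<^sup>*\<^sup>* x y"
  using assms(3)
proof (induction "card (x - y)" arbitrary: x rule: less_induct)
  case less
  show ?case
  proof (cases "x = y")
    case False
    then obtain x' where "x' \<in> state_space V E" "0 < T_SM p q x x'" "card (x' - y) < card (x - y)"
      using exists_move_closer[OF assms(1,2) less.prems assms(4)] by blast
    then show ?thesis using less by (auto intro: converse_rtranclp_into_rtranclp)
  qed simp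
qed

lemma T_SM_short_cycles:
  assumes p: "0 < p" and q: "0 < q" and x: "x \<in> state_space V E"
    and ij: "(i, j) \<in> single_edges x" and kl: "(k, l) \<in> double_edges x"
  obtains x1 x2 where "x1 \<in> state_space V E" "x2 \<in> state_space V E"
    and "0 < T_SM p q x x1" "0 < T_SM p q x1 x" "0 < T_SM p q x1 x2" "0 < T_SM p q x2 x"
proof -
  have "k \<noteq> l" using kl state_space_irrefl[OF x] by (auto simp: double_edges_def)
  define x1 where "x1 = SEF i j x"
  define x2 where "x2 = DEM k l i j x"
  have ji: "(j, i) \<in> single_edges x1" and back1: "SEF j i x1 = x"
    using SEF_reverse[OF ij] by (simp_all add: x1_def)
  have kl1: "(k, l) \<in> double_edges x1" and to2: "DEM k l j i x1 = x2"
    using ij kl by (auto simp: x1_def x2_def SEF_def DEM_def single_edges_def double_edges_def)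
  have lk: "(l, k) \<in> single_edges x2" and ji2: "(j, i) \<in> double_edges x2"
    and back2: "DEM j i l k x2 = x"
    using DEM_reverse[OF ij kl \<open>k \<noteq> l\<close>] by (simp_all add: x2_def)
  have S: "x1 \<in> state_space V E" "x2 \<in> state_space V E"
    using SEF_in_state_space[OF x ij] DEM_in_state_space[OF x ij kl] by (simp_all add: x1_def x2_def)
  have "0 < T_SM p q x x1" "0 < T_SM p q x1 x" "0 < T_SM p q x1 x2" "0 < T_SM p q x2 x"
    using T_SM_SEF_pos[OF p less_imp_le[OF q] x ij] T_SM_SEF_pos[OF p less_imp_le[OF q] S(1) ji]
      T_SM_DEM_pos[OF less_imp_le[OF p] q S(1) ji kl1] T_SM_DEM_pos[OF less_imp_le[OF p] q S(2) lk ji2]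
      back1 to2 back2 by (simp_all add: x1_def)
  with S show ?thesis by (rule that)
qed

lemma T_SM_consecutive_returns:
  assumes G: "simple_digraph V E" and p: "0 < p" and q: "0 < q" and x: "x \<in> state_space V E"
    and "double_edges E \<noteq> {}"
  obtains n where "0 < n" and "0 < mat_pow_on (state_space V E) (T_SM p q) n x x"
    and "0 < mat_pow_on (state_space V E) (T_SM p q) (Suc n) x x"
proof -
  let ?S = "state_space V E" and ?T = "T_SM p q"
  have walk: "0 < mat_pow_on ?S ?T (length ys) x (last (x # ys))"
    if "set ys \<subseteq> ?S" "successively (\<lambda>a b. 0 < ?T a b) (x # ys)" for ys
    using mat_pow_on_pos_walk[OF finite_state_space[OF G] _ x that]
      T_SM_nonneg[OF less_imp_le[OF p] less_imp_le[OF q]] by blast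
  show ?thesis
  proof (cases "single_edges x = {}")
    case True
    then have "0 < ?T x x" using p q by (intro T_SM_self_pos) simp_all
    then show ?thesis
      using that[of "Suc 0"] walk[of "[x]"] walk[of "[x, x]"] x by (simp del: mat_pow_on.simps)
  next
    case False
    then obtain i j where ij: "(i, j) \<in> single_edges x" by auto
    have "card (double_edges E) \<noteq> 0"
      using assms(5) finite_edges_state_space(3)[OF self_in_state_space[OF G]] by simp
    then have "double_edges x \<noteq> {}"
      using card_edges_state_space(2)[OF x self_in_state_space[OF G]] by auto
    then obtain k l where kl: "(k, l) \<in> double_edges x" by auto
    obtain x1 x2 where "x1 \<in> ?S" "x2 \<in> ?S"
      and "0 < ?T x x1" "0 < ?T x1 x" "0 < ?T x1 x2" "0 < ?T x2 x"
      using T_SM_short_cycles[OF p q x ij kl] .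
    then show ?thesis
      using that[of "Suc (Suc 0)"] walk[of "[x1, x]"] walk[of "[x1, x2, x]"] x
      by (simp del: mat_pow_on.simps)
  qed
qed

theorem lemma3p5:
  fixes V :: "'v set" and E :: "('v \<times> 'v) set" and p_SEF p_DEM :: real
  assumes "simple_digraph V E"
    and "0 < p_SEF" and "p_SEF < 1" and "0 < p_DEM" and "p_DEM < 1"
    and "p_SEF + p_DEM = 1"
  shows "doubly_stochastic_on (state_space V E) (T_SM p_SEF p_DEM)
       \<and> irreducible_on (state_space V E) (T_SM p_SEF p_DEM)
       \<and> (double_edges E \<noteq> {} \<longrightarrow> aperiodic_on (state_space V E) (T_SM p_SEF p_DEM))"
proof (intro conjI impI)
  let ?S = "state_space V E" and ?T = "T_SM p_SEF p_DEM"
  have nonneg: "\<forall>a\<in>?S. \<forall>b\<in>?S. 0 \<le> ?T a b"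
    using T_SM_nonneg[OF less_imp_le[OF assms(2)] less_imp_le[OF assms(4)]] by blast
  show "doubly_stochastic_on ?S ?T"
    using assms T_SM_sym by (intro doubly_stochastic_on_if_symmetric stochastic_on_T_SM) auto
  show "irreducible_on ?S ?T"
    unfolding irreducible_on_def
    using mat_pow_on_pos_if_reachable[OF finite_state_space[OF assms(1)] nonneg]
      state_space_reachable[OF assms(2,4)] by blast
  show "aperiodic_on ?S ?T" if double: "double_edges E \<noteq> {}"
    unfolding aperiodic_on_def
  proof
    fix x assume "x \<in> ?S"
    then obtain n where "0 < n" "0 < mat_pow_on ?S ?T n x x" "0 < mat_pow_on ?S ?T (Suc n) x x"
      using T_SM_consecutive_returns[OF assms(1,2,4) _ double] by blast
    then show "Gcd {n. 0 < n \<and> 0 < mat_pow_on ?S ?T n x x} = 1"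
      by (intro Gcd_eq_1_if_consecutive[of n]) auto
  qed
qed

end
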